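(* Let $D$ be an integral domain. Then every nonzero prime ideal of $R(D)$ is an intersection of ideals of the form $\mathfrak p_f$ with $f\in D\setminus\{0\}$.
   Context: For an integral domain $D$ with fraction field $F$, the reciprocal complement $R(D)$ is the subring of $F$ generated by all $1/d$, $d\in D\setminus\{0\}$. For nonzero $f\in D$, $\mathfrak p_f$ denotes the unique prime ideal of $R(D)$ maximal with respect to not containing $1/f$. *)

theory Defs
  imports "HOL-Computational_Algebra.Fraction_Field"
begin

text \<open>The integral domain D is the type 'a (class idom); its fraction field is 'a fract,
  with D embedded via d maps to Fract d 1.\<close>

inductive_set recip_compl :: "('a::idom) fract set" where
  recip: "d \<noteq> 0 \<Longrightarrow> 1 / Fract d 1 \<in> recip_compl"
| zero: "0 \<in> recip_compl"
| one: "1 \<in> recip_compl"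
| add: "x \<in> recip_compl \<Longrightarrow> y \<in> recip_compl \<Longrightarrow> x + y \<in> recip_compl"
| neg: "x \<in> recip_compl \<Longrightarrow> - x \<in> recip_compl"
| mult: "x \<in> recip_compl \<Longrightarrow> y \<in> recip_compl \<Longrightarrow> x * y \<in> recip_compl"

definition rc_ideal :: "('a::idom) fract set \<Rightarrow> bool" where
  "rc_ideal I \<longleftrightarrow> I \<subseteq> recip_compl \<and> 0 \<in> I \<and>
     (\<forall>x\<in>I. \<forall>y\<in>I. x + y \<in> I) \<and> (\<forall>x\<in>I. - x \<in> I) \<and>
     (\<forall>r\<in>recip_compl. \<forall>x\<in>I. r * x \<in> I)"

definition rc_prime :: "('a::idom) fract set \<Rightarrow> bool" where
  "rc_prime P \<longleftrightarrow> rc_ideal P \<and> P \<noteq> recip_compl \<and>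
     (\<forall>a\<in>recip_compl. \<forall>b\<in>recip_compl. a * b \<in> P \<longrightarrow> a \<in> P \<or> b \<in> P)"

definition p_f :: "('a::idom) \<Rightarrow> 'a fract set" where
  "p_f f = (THE P. rc_prime P \<and> 1 / Fract f 1 \<notin> P \<and>
     (\<forall>Q. rc_prime Q \<and> 1 / Fract f 1 \<notin> Q \<and> P \<subseteq> Q \<longrightarrow> Q = P))"

end

theory Submission
  imports Defs
begin

text \<open>Here Fract 1 e is the reciprocal 1/e of e in the fraction field (it is 0 for e = 0).

  Every element of R(D) is a finite sum of reciprocals. Relative to a prime P, the summands
  not in P add up to a single fraction a/b with 1/b not in P, because P is prime. Such a
  fraction lies in an ideal avoiding 1/b only if a = 0, since 1/b = (1/a)(a/b). Hence a prime
  consists of the sums of the reciprocals it contains.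

  For f nonzero, an ideal maximal among those avoiding the powers of 1/f (Zorn) is prime,
  and every reciprocal outside it divides a power of 1/f in R(D); so it contains every prime
  not containing 1/f, i.e. it is p_f. Now P lies in p_f whenever 1/f is not in P, while an
  element a/b + n outside P, with n in P and a nonzero, lies outside p_b.\<close>

lemma Fract_1_in_recip_compl: "Fract 1 e \<in> recip_compl"
proof (cases "e = 0")
  case True
  then show ?thesis by (simp add: fract_collapse recip_compl.zero)
next
  case False
  then show ?thesis using recip_compl.recip[of e] by (simp add: One_fract_def)
qed

fun recip_sum :: "'a::idom list \<Rightarrow> 'a fract" where
  "recip_sum [] = 0"
| "recip_sum (e # es) = Fract 1 e + recip_sum es"

lemma recip_sum_append: "recip_sum (xs @ ys) = recip_sum xs + recip_sum ys"
  by (induction xs) simp_all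

lemma Fract_1_uminus: "Fract 1 (- e) = - Fract 1 e"
  by (metis minus_fract minus_fract_cancel minus_minus)

lemma uminus_recip_sum: "- recip_sum es = recip_sum (map uminus es)"
  by (induction es) (simp_all add: Fract_1_uminus)

lemma recip_sum_mult:
  "recip_sum xs * recip_sum ys = recip_sum (concat (map (\<lambda>a. map ((*) a) ys) xs))"
proof (induction xs)
  case Nil
  then show ?case by simp
next
  case (Cons a xs)
  have "Fract 1 a * recip_sum ys = recip_sum (map ((*) a) ys)"
    by (induction ys) (simp_all add: distrib_left)
  with Cons show ?case by (simp add: distrib_right recip_sum_append)
qed

lemma recip_compl_recip_sumE:
  assumes "x \<in> recip_compl"
  obtains es where "x = recip_sum es"
proof -
  from assms have "\<exists>es. x = recip_sum es"
  proof (induction rule: recip_compl.induct)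
    case (recip d)
    show ?case by (rule exI[of _ "[d]"]) (simp add: One_fract_def)
  next
    case zero
    show ?case by (rule exI[of _ "[]"]) simp
  next
    case one
    show ?case by (rule exI[of _ "[1]"]) (simp add: fract_collapse)
  next
    case (add x y)
    then show ?case by (metis recip_sum_append)
  next
    case (neg x)
    then show ?case by (metis uminus_recip_sum)
  next
    case (mult x y)
    then show ?case by (metis recip_sum_mult)
  qed
  then show ?thesis using that by blast
qed

lemma rc_ideal_subset: "rc_ideal I \<Longrightarrow> I \<subseteq> recip_compl"
  and rc_ideal_zero: "rc_ideal I \<Longrightarrow> 0 \<in> I"
  and rc_ideal_add: "rc_ideal I \<Longrightarrow> x \<in> I \<Longrightarrow> y \<in> I \<Longrightarrow> x + y \<in> I"
  and rc_ideal_uminus: "rc_ideal I \<Longrightarrow> x \<in> I \<Longrightarrow> - x \<in> I"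
  and rc_ideal_mult_left: "rc_ideal I \<Longrightarrow> r \<in> recip_compl \<Longrightarrow> x \<in> I \<Longrightarrow> r * x \<in> I"
  unfolding rc_ideal_def by blast+

lemma rc_ideal_mult_right: "rc_ideal I \<Longrightarrow> r \<in> recip_compl \<Longrightarrow> x \<in> I \<Longrightarrow> x * r \<in> I"
  by (metis rc_ideal_mult_left mult.commute)

lemma rc_ideal_diff: "rc_ideal I \<Longrightarrow> x \<in> I \<Longrightarrow> y \<in> I \<Longrightarrow> x - y \<in> I"
  by (metis diff_conv_add_uminus rc_ideal_add rc_ideal_uminus)

lemma rc_ideal_recip_sum:
  "rc_ideal I \<Longrightarrow> \<forall>e\<in>set es. Fract 1 e \<in> I \<Longrightarrow> recip_sum es \<in> I"
  by (induction es) (simp_all add: rc_ideal_zero rc_ideal_add)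

lemma rc_prime_ideal: "rc_prime P \<Longrightarrow> rc_ideal P"
  by (simp add: rc_prime_def)

lemma rc_prime_mult_notin:
  "rc_prime P \<Longrightarrow> x \<in> recip_compl \<Longrightarrow> y \<in> recip_compl \<Longrightarrow> x \<notin> P \<Longrightarrow> y \<notin> P \<Longrightarrow> x * y \<notin> P"
  unfolding rc_prime_def by blast

lemma rc_prime_one_notin: "rc_prime P \<Longrightarrow> 1 \<notin> P"
  unfolding rc_prime_def
  by (metis mult.right_neutral rc_ideal_mult_left rc_ideal_subset subsetI subset_antisym)

lemma rc_prime_power_notin:
  assumes "rc_prime P" "x \<in> recip_compl" "x \<notin> P"
  shows "x ^ k \<notin> P"
proof (induction k)
  case 0
  then show ?case using rc_prime_one_notin[OF assms(1)] by simp
next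
  case (Suc k)
  have "x ^ k \<in> recip_compl"
    by (induction k) (simp_all add: assms(2) recip_compl.one recip_compl.mult)
  with Suc show ?case using rc_prime_mult_notin assms by simp
qed

lemma recip_notin_nonzero: "rc_ideal P \<Longrightarrow> Fract 1 b \<notin> P \<Longrightarrow> b \<noteq> 0"
  by (auto simp: fract_collapse rc_ideal_zero)

lemma recip_mult_notin:
  "rc_prime P \<Longrightarrow> Fract 1 a \<notin> P \<Longrightarrow> Fract 1 b \<notin> P \<Longrightarrow> Fract 1 (a * b) \<notin> P"
  using rc_prime_mult_notin[OF _ Fract_1_in_recip_compl Fract_1_in_recip_compl, of P a b] by simp

lemma recip_sum_decompose:
  assumes "rc_prime P"
  shows "\<exists>a b ns. Fract 1 b \<notin> P \<and> (\<forall>e\<in>set ns. Fract 1 e \<in> P) \<and>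
    recip_sum es = Fract a b + recip_sum ns"
proof (induction es)
  case Nil
  show ?case
    using rc_prime_one_notin[OF assms]
    by (intro exI[of _ 0] exI[of _ 1] exI[of _ "[]"]) (simp add: fract_collapse)
next
  case (Cons e es)
  then obtain a b ns where b: "Fract 1 b \<notin> P"
    and ns: "\<forall>e\<in>set ns. Fract 1 e \<in> P" and es: "recip_sum es = Fract a b + recip_sum ns"
    by blast
  show ?case
  proof (cases "Fract 1 e \<in> P")
    case True
    with b ns es show ?thesis
      by (intro exI[of _ a] exI[of _ b] exI[of _ "e # ns"]) (simp add: add_ac)
  next
    case False
    have "e \<noteq> 0" "b \<noteq> 0"
      using False b recip_notin_nonzero[OF rc_prime_ideal[OF assms]] by auto
    then have "recip_sum (e # es) = Fract (b + a * e) (e * b) + recip_sum ns"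
      using es by (simp add: add.assoc)
    with ns show ?thesis
      using recip_mult_notin[OF assms False b] by blast
  qed
qed

lemma rc_prime_decompose:
  assumes "rc_prime P" "x \<in> recip_compl"
  obtains a b ns where "Fract 1 b \<notin> P" "\<forall>e\<in>set ns. Fract 1 e \<in> P"
    "x = Fract a b + recip_sum ns"
proof -
  obtain es where "x = recip_sum es" using recip_compl_recip_sumE[OF assms(2)] .
  then show ?thesis using recip_sum_decompose[OF assms(1), of es] that by blast
qed

lemma Fract_in_rc_ideal_imp_zero:
  assumes "rc_ideal P" "Fract 1 b \<notin> P" "Fract a b \<in> P"
  shows "a = 0"
proof (rule ccontr)
  assume "a \<noteq> 0"
  then have "Fract 1 b = Fract 1 a * Fract a b"
    using mult_fract_cancel[of a 1 b] by simp
  also have "\<dots> \<in> P"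
    using rc_ideal_mult_left[OF assms(1) Fract_1_in_recip_compl assms(3)] .
  finally show False using assms(2) by simp
qed

lemma rc_prime_recip_sumE:
  assumes "rc_prime P" "x \<in> P"
  obtains ns where "\<forall>e\<in>set ns. Fract 1 e \<in> P" "x = recip_sum ns"
proof -
  have I: "rc_ideal P" using assms(1) by (rule rc_prime_ideal)
  have "x \<in> recip_compl" using rc_ideal_subset[OF I] assms(2) by blast
  then obtain a b ns where b: "Fract 1 b \<notin> P" and ns: "\<forall>e\<in>set ns. Fract 1 e \<in> P"
    and x: "x = Fract a b + recip_sum ns"
    by (rule rc_prime_decompose[OF assms(1)])
  have "Fract a b = x - recip_sum ns" using x by simp
  also have "\<dots> \<in> P" using rc_ideal_diff[OF I assms(2) rc_ideal_recip_sum[OF I ns]] .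
  finally have "a = 0" by (rule Fract_in_rc_ideal_imp_zero[OF I b])
  with x have "x = recip_sum ns" by (simp add: fract_collapse)
  with ns show ?thesis by (rule that)
qed

lemma rc_prime_subset_if_recips_subset:
  assumes "rc_prime P" "rc_ideal J" "\<And>e. Fract 1 e \<in> P \<Longrightarrow> Fract 1 e \<in> J"
  shows "P \<subseteq> J"
proof
  fix x assume "x \<in> P"
  then obtain ns where "\<forall>e\<in>set ns. Fract 1 e \<in> P" "x = recip_sum ns"
    using rc_prime_recip_sumE[OF assms(1)] by blast
  then show "x \<in> J" using assms(3) rc_ideal_recip_sum[OF assms(2)] by simp
qed

lemma Fract_1_power: "Fract 1 f ^ k = Fract 1 (f ^ k)"
  by (induction k) (simp_all add: fract_collapse)

lemma rc_ideal_Union_chain: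
  assumes "C \<noteq> {}" "subset.chain (Collect rc_ideal) C"
  shows "rc_ideal (\<Union>C)"
proof -
  have ideals: "\<And>I. I \<in> C \<Longrightarrow> rc_ideal I"
    and chain: "\<And>I J. I \<in> C \<Longrightarrow> J \<in> C \<Longrightarrow> I \<subseteq> J \<or> J \<subseteq> I"
    using assms(2) by (auto simp: subset_chain_def)
  show ?thesis
    unfolding rc_ideal_def
  proof (intro conjI ballI)
    show "\<Union>C \<subseteq> recip_compl" using ideals rc_ideal_subset by blast
    show "0 \<in> \<Union>C" using assms(1) ideals rc_ideal_zero by blast
  next
    fix x y assume "x \<in> \<Union>C" "y \<in> \<Union>C"
    then obtain I J where "I \<in> C" "J \<in> C" "x \<in> I" "y \<in> J" by blast
    then show "x + y \<in> \<Union>C"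
      using chain[of I J] ideals rc_ideal_add by blast
  next
    fix x assume "x \<in> \<Union>C"
    then show "- x \<in> \<Union>C" using ideals rc_ideal_uminus by blast
  next
    fix r x :: "'a fract" assume "r \<in> recip_compl" "x \<in> \<Union>C"
    then show "r * x \<in> \<Union>C" using ideals rc_ideal_mult_left by blast
  qed
qed

definition avoids_powers :: "'a::idom \<Rightarrow> 'a fract set \<Rightarrow> bool" where
  "avoids_powers f J \<longleftrightarrow> (\<forall>k. Fract 1 f ^ k \<notin> J)"

definition max_ideal_avoiding :: "'a::idom \<Rightarrow> 'a fract set \<Rightarrow> bool" where
  "max_ideal_avoiding f Q \<longleftrightarrow> rc_ideal Q \<and> avoids_powers f Q \<and>
     (\<forall>J. rc_ideal J \<and> avoids_powers f J \<and> Q \<subseteq> J \<longrightarrow> J = Q)"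

lemma ex_max_ideal_avoiding:
  assumes "f \<noteq> 0"
  shows "\<exists>Q. max_ideal_avoiding f Q"
proof -
  let ?A = "{J. rc_ideal J \<and> avoids_powers f J}"
  have "rc_ideal {0}"
    by (simp add: rc_ideal_def recip_compl.zero)
  moreover have "avoids_powers f {0}"
    using assms by (simp add: avoids_powers_def Fract_1_power Zero_fract_def eq_fract(1))
  ultimately have "?A \<noteq> {}" by blast
  moreover have "\<Union>C \<in> ?A" if "C \<noteq> {}" "subset.chain ?A C" for C
  proof -
    have "subset.chain (Collect rc_ideal) C"
      using that(2) by (auto simp: subset_chain_def)
    with that show ?thesis
      using rc_ideal_Union_chain by (auto simp: subset_chain_def avoids_powers_def)
  qed
  ultimately obtain Q where "Q \<in> ?A" "\<forall>J\<in>?A. Q \<subseteq> J \<longrightarrow> J = Q"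
    using subset_Zorn_nonempty[of ?A] by blast
  then show ?thesis unfolding max_ideal_avoiding_def by blast
qed

lemma max_ideal_avoiding_recip_notin: "max_ideal_avoiding f Q \<Longrightarrow> Fract 1 f \<notin> Q"
  unfolding max_ideal_avoiding_def avoids_powers_def by (metis power_one_right)

lemma rc_ideal_add_multiples:
  assumes "rc_ideal I" "x \<in> recip_compl"
  shows "rc_ideal {q + x * r | q r. q \<in> I \<and> r \<in> recip_compl}" (is "rc_ideal ?J")
  unfolding rc_ideal_def
proof (intro conjI ballI)
  show "?J \<subseteq> recip_compl"
    using assms rc_ideal_subset by (blast intro: recip_compl.add recip_compl.mult)
  show "0 \<in> ?J"
    using rc_ideal_zero[OF assms(1)] recip_compl.zero by force
next
  fix y z assume "y \<in> ?J" "z \<in> ?J"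
  then obtain q r q' r' where "q \<in> I" "r \<in> recip_compl" "q' \<in> I" "r' \<in> recip_compl"
    "y = q + x * r" "z = q' + x * r'" by blast
  then show "y + z \<in> ?J"
    by (intro CollectI exI[of _ "q + q'"] exI[of _ "r + r'"])
      (auto simp: algebra_simps intro: rc_ideal_add[OF assms(1)] recip_compl.add)
next
  fix y assume "y \<in> ?J"
  then obtain q r where "q \<in> I" "r \<in> recip_compl" "y = q + x * r" by blast
  then show "- y \<in> ?J"
    by (intro CollectI exI[of _ "- q"] exI[of _ "- r"])
      (auto intro: rc_ideal_uminus[OF assms(1)] recip_compl.neg)
next
  fix s y :: "'a fract" assume s: "s \<in> recip_compl" and "y \<in> ?J"
  then obtain q r where q: "q \<in> I" and r: "r \<in> recip_compl" and y: "y = q + x * r" by blast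
  have "s * y = s * q + x * (s * r)" using y by (simp add: algebra_simps)
  moreover have "s * q \<in> I" using rc_ideal_mult_left[OF assms(1) s q] .
  moreover have "s * r \<in> recip_compl" using s r by (rule recip_compl.mult)
  ultimately show "s * y \<in> ?J" by blast
qed

lemma max_ideal_avoiding_meets_powers:
  assumes "max_ideal_avoiding f Q" "x \<in> recip_compl" "x \<notin> Q"
  obtains q r k where "q \<in> Q" "r \<in> recip_compl" "q + x * r = Fract 1 f ^ k"
proof -
  let ?J = "{q + x * r | q r. q \<in> Q \<and> r \<in> recip_compl}"
  have I: "rc_ideal Q" using assms(1) by (simp add: max_ideal_avoiding_def)
  have "Q \<subseteq> ?J" using recip_compl.zero by force
  moreover have "x \<in> ?J" using rc_ideal_zero[OF I] recip_compl.one by force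
  ultimately have "\<not> avoids_powers f ?J"
    using assms rc_ideal_add_multiples[OF I assms(2)] unfolding max_ideal_avoiding_def by blast
  then obtain k where "Fract 1 f ^ k \<in> ?J" unfolding avoids_powers_def by blast
  then obtain q r where "q \<in> Q" "r \<in> recip_compl" "Fract 1 f ^ k = q + x * r" by blast
  then show ?thesis using that[of q r k] by simp
qed

lemma max_ideal_avoiding_prime:
  assumes max: "max_ideal_avoiding f Q"
  shows "rc_prime Q"
proof -
  have I: "rc_ideal Q" and avoids: "avoids_powers f Q"
    using max by (simp_all add: max_ideal_avoiding_def)
  have "1 \<notin> Q" using avoids unfolding avoids_powers_def by (metis power_0)
  then have proper: "Q \<noteq> recip_compl" using recip_compl.one by blast
  have "x \<in> Q \<or> y \<in> Q" if x: "x \<in> recip_compl" and y: "y \<in> recip_compl" and xy: "x * y \<in> Q"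
    for x y
  proof (rule ccontr)
    assume "\<not> (x \<in> Q \<or> y \<in> Q)"
    then obtain q r j q' r' k where q: "q \<in> Q" "r \<in> recip_compl" "q + x * r = Fract 1 f ^ j"
      and q': "q' \<in> Q" "r' \<in> recip_compl" "q' + y * r' = Fract 1 f ^ k"
      using max_ideal_avoiding_meets_powers[OF max] x y by metis
    have "Fract 1 f ^ (j + k) = q * (q' + y * r') + (x * r) * q' + (x * y) * (r * r')"
      by (simp add: power_add flip: q(3) q'(3)) (simp add: algebra_simps)
    also have "\<dots> \<in> Q"
    proof -
      have "q' + y * r' \<in> recip_compl"
        using q'(1,2) y rc_ideal_subset[OF I] by (blast intro: recip_compl.add recip_compl.mult)
      then have "q * (q' + y * r') \<in> Q" by (rule rc_ideal_mult_right[OF I _ q(1)])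
      moreover have "(x * r) * q' \<in> Q"
        using x q(2) by (intro rc_ideal_mult_left[OF I _ q'(1)] recip_compl.mult)
      moreover have "(x * y) * (r * r') \<in> Q"
        using q(2) q'(2) by (intro rc_ideal_mult_right[OF I _ xy] recip_compl.mult)
      ultimately show ?thesis by (intro rc_ideal_add[OF I])
    qed
    finally show False using avoids unfolding avoids_powers_def by blast
  qed
  with I proper show ?thesis by (simp add: rc_prime_def)
qed

text \<open>From q + r/d = (1/f)^k with q in Q, write r = a/b + n with n in Q and 1/b not in Q;
  then a/(db) - (1/f)^k is a fraction in Q whose denominator has reciprocal outside Q,
  so it vanishes and 1/d divides (1/f)^k.\<close>
lemma max_ideal_avoiding_recip_dvd_power:
  assumes max: "max_ideal_avoiding f Q" and d: "Fract 1 d \<notin> Q"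
  obtains s k where "s \<in> recip_compl" "Fract 1 d * s = Fract 1 f ^ k"
proof -
  have I: "rc_ideal Q" and P: "rc_prime Q"
    using max max_ideal_avoiding_prime by (auto simp: max_ideal_avoiding_def)
  have f: "Fract 1 f \<notin> Q" using max by (rule max_ideal_avoiding_recip_notin)
  obtain q r k where q: "q \<in> Q" and r: "r \<in> recip_compl" and qr: "q + Fract 1 d * r = Fract 1 f ^ k"
    using max_ideal_avoiding_meets_powers[OF max Fract_1_in_recip_compl d] .
  obtain a b ns where b: "Fract 1 b \<notin> Q" and ns: "\<forall>e\<in>set ns. Fract 1 e \<in> Q"
    and r_eq: "r = Fract a b + recip_sum ns"
    using rc_prime_decompose[OF P r] .
  have n: "recip_sum ns \<in> Q" using rc_ideal_recip_sum[OF I ns] .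
  have denom: "Fract 1 (d * b * f ^ k) \<notin> Q"
    using recip_mult_notin[OF P recip_mult_notin[OF P d b]] rc_prime_power_notin[OF P _ f]
    by (simp add: Fract_1_power Fract_1_in_recip_compl)
  have "d \<noteq> 0" "b \<noteq> 0" "f \<noteq> 0"
    using d b f recip_notin_nonzero[OF I] by auto
  then have "Fract (a * f ^ k - d * b) (d * b * f ^ k) = Fract 1 d * Fract a b - Fract 1 f ^ k"
    by (simp add: Fract_1_power)
  also have "\<dots> = - (q + Fract 1 d * recip_sum ns)"
    using qr r_eq by (simp add: algebra_simps)
  also have "\<dots> \<in> Q"
    using q n
    by (intro rc_ideal_uminus[OF I] rc_ideal_add[OF I] rc_ideal_mult_left[OF I Fract_1_in_recip_compl])
  finally have "a * f ^ k - d * b = 0"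
    by (rule Fract_in_rc_ideal_imp_zero[OF I denom])
  then have "Fract 1 d * Fract a b = Fract 1 f ^ k"
    using \<open>d \<noteq> 0\<close> \<open>b \<noteq> 0\<close> \<open>f \<noteq> 0\<close> by (simp add: Fract_1_power eq_fract(1))
  moreover have "r + - recip_sum ns \<in> recip_compl"
    using r n rc_ideal_subset[OF I] by (blast intro: recip_compl.add recip_compl.neg)
  then have "Fract a b \<in> recip_compl"
    using r_eq by simp
  ultimately show ?thesis using that by blast
qed

lemma max_ideal_avoiding_greatest:
  assumes max: "max_ideal_avoiding f Q" and P: "rc_prime P" "Fract 1 f \<notin> P"
  shows "P \<subseteq> Q"
proof (rule rc_prime_subset_if_recips_subset[OF P(1)])
  show "rc_ideal Q" using max by (simp add: max_ideal_avoiding_def)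
next
  fix e assume e: "Fract 1 e \<in> P"
  show "Fract 1 e \<in> Q"
  proof (rule ccontr)
    assume "Fract 1 e \<notin> Q"
    then obtain s k where "s \<in> recip_compl" "Fract 1 e * s = Fract 1 f ^ k"
      by (rule max_ideal_avoiding_recip_dvd_power[OF max])
    then have "Fract 1 f ^ k \<in> P"
      using rc_ideal_mult_right[OF rc_prime_ideal[OF P(1)] _ e] by metis
    then show False
      using rc_prime_power_notin[OF P(1) Fract_1_in_recip_compl P(2)] by blast
  qed
qed

lemma one_divide_Fract: "1 / Fract e 1 = Fract 1 e"
  by (simp add: One_fract_def)

lemma p_f_eq_max_ideal_avoiding:
  assumes max: "max_ideal_avoiding f Q"
  shows "p_f f = Q"
  unfolding p_f_def one_divide_Fract
proof (rule the_equality)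
  have prime: "rc_prime Q" by (rule max_ideal_avoiding_prime[OF max])
  have f: "Fract 1 f \<notin> Q" using max by (rule max_ideal_avoiding_recip_notin)
  show "rc_prime Q \<and> Fract 1 f \<notin> Q \<and> (\<forall>P. rc_prime P \<and> Fract 1 f \<notin> P \<and> Q \<subseteq> P \<longrightarrow> P = Q)"
    using prime f max_ideal_avoiding_greatest[OF max] by blast
  fix P assume "rc_prime P \<and> Fract 1 f \<notin> P \<and> (\<forall>P'. rc_prime P' \<and> Fract 1 f \<notin> P' \<and> P \<subseteq> P' \<longrightarrow> P' = P)"
  then show "P = Q"
    using prime f max_ideal_avoiding_greatest[OF max] by blast
qed

lemma
  assumes "f \<noteq> 0"
  shows rc_prime_p_f: "rc_prime (p_f f)"
    and recip_notin_p_f: "Fract 1 f \<notin> p_f f"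
proof -
  obtain Q where max: "max_ideal_avoiding f Q"
    using ex_max_ideal_avoiding[OF assms] by blast
  then show "rc_prime (p_f f)"
    by (simp add: p_f_eq_max_ideal_avoiding max_ideal_avoiding_prime)
  show "Fract 1 f \<notin> p_f f"
    using max by (simp add: p_f_eq_max_ideal_avoiding max_ideal_avoiding_recip_notin)
qed

lemma rc_prime_subset_p_f:
  assumes "rc_prime P" "Fract 1 f \<notin> P"
  shows "P \<subseteq> p_f f"
proof -
  have "f \<noteq> 0" using assms recip_notin_nonzero rc_prime_ideal by blast
  then obtain Q where max: "max_ideal_avoiding f Q"
    using ex_max_ideal_avoiding by blast
  show ?thesis
    using max_ideal_avoiding_greatest[OF max assms] p_f_eq_max_ideal_avoiding[OF max] by simp
qed

lemma notin_rc_prime_imp_notin_p_f: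
  assumes P: "rc_prime P" and x: "x \<in> recip_compl" "x \<notin> P"
  obtains b where "Fract 1 b \<notin> P" "x \<notin> p_f b"
proof -
  obtain a b ns where b: "Fract 1 b \<notin> P" and ns: "\<forall>e\<in>set ns. Fract 1 e \<in> P"
    and x_eq: "x = Fract a b + recip_sum ns"
    using rc_prime_decompose[OF P x(1)] .
  have n: "recip_sum ns \<in> P" using rc_ideal_recip_sum[OF rc_prime_ideal[OF P] ns] .
  have "x \<notin> p_f b"
  proof
    assume "x \<in> p_f b"
    have I: "rc_ideal (p_f b)" and b': "Fract 1 b \<notin> p_f b"
      using b recip_notin_nonzero[OF rc_prime_ideal[OF P] b]
      by (simp_all add: rc_prime_ideal rc_prime_p_f recip_notin_p_f)
    have "Fract a b = x - recip_sum ns" using x_eq by simp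
    also have "\<dots> \<in> p_f b"
      using rc_ideal_diff[OF I \<open>x \<in> p_f b\<close> subsetD[OF rc_prime_subset_p_f[OF P b] n]] .
    finally have "a = 0" by (rule Fract_in_rc_ideal_imp_zero[OF I b'])
    then show False using x x_eq n by (simp add: fract_collapse)
  qed
  with b show ?thesis by (rule that)
qed

lemma rc_prime_eq_Inter_p_f:
  assumes P: "rc_prime P"
  shows "P = (\<Inter>f\<in>{f. Fract 1 f \<notin> P}. p_f f)"
proof
  show "P \<subseteq> (\<Inter>f\<in>{f. Fract 1 f \<notin> P}. p_f f)"
    using rc_prime_subset_p_f[OF P] by blast
next
  show "(\<Inter>f\<in>{f. Fract 1 f \<notin> P}. p_f f) \<subseteq> P"
  proof
    fix x assume x: "x \<in> (\<Inter>f\<in>{f. Fract 1 f \<notin> P}. p_f f)"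
    have "Fract 1 1 \<notin> P" using rc_prime_one_notin[OF P] by (simp add: fract_collapse)
    then have "x \<in> p_f 1" using x by blast
    moreover have "rc_prime (p_f 1)" by (rule rc_prime_p_f) simp
    ultimately have "x \<in> recip_compl"
      using rc_ideal_subset[OF rc_prime_ideal] by blast
    show "x \<in> P"
    proof (rule ccontr)
      assume "x \<notin> P"
      then obtain b where "Fract 1 b \<notin> P" "x \<notin> p_f b"
        using notin_rc_prime_imp_notin_p_f[OF P \<open>x \<in> recip_compl\<close>] by blast
      with x show False by blast
    qed
  qed
qed

theorem mainTheorem17:
  fixes P :: "('a::idom) fract set"
  assumes "rc_prime P" and "P \<noteq> {0}"
  shows "\<exists>S. S \<subseteq> {f::'a. f \<noteq> 0} \<and> P = (\<Inter>f\<in>S. p_f f)"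
proof (intro exI conjI)
  show "{f. Fract 1 f \<notin> P} \<subseteq> {f. f \<noteq> 0}"
    using recip_notin_nonzero[OF rc_prime_ideal[OF assms(1)]] by blast
  show "P = (\<Inter>f\<in>{f. Fract 1 f \<notin> P}. p_f f)"
    by (rule rc_prime_eq_Inter_p_f[OF assms(1)])
qed

end
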